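(* Let $\Gamma=F_r$ ($r\ge2$) be free on $\{a,b,a_3,\dots,a_r\}$, and for $n\ge2$ let $u_n=a^nba^{-n}b^{-1}$ and $D_n=V_{u_n}\subseteq Y$. Let $n_1,n_2\ge2$ and let $t\in\Gamma$ be nontrivial with $tD_{n_2}\cap D_{n_1}\ne\emptyset$. Then one of the following holds: (1) $t$ ends with $u_{n_2}^{-1}=ba^{n_2}b^{-1}a^{-n_2}$; (2) $t$ starts with $u_{n_1}=a^{n_1}ba^{-n_1}b^{-1}$; (3) $n_2\ne n_1$ and $t=u_{n_1}u_{n_2}^{-1}=a^{n_1}ba^{n_2-n_1}b^{-1}a^{-n_2}$.
   Context: $Y$ is the Gromov boundary of $\Gamma$: infinite reduced words in the generators and their inverses, with $\Gamma$ acting by concatenation and cancellation. For nontrivial $s\in\Gamma$: $y\in Y$ starts with $s$ if $y=sy'$ with $y'\in Y$ and the last letter of the reduced word of $s$ is not the inverse of the first letter of $y'$; $V_s$ is the set of $y\in Y$ starting with $s$; $t\in\Gamma$ starts (resp. ends) with $s$ if the reduced word of $t$ begins (resp. ends) with the reduced word of $s$. *)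

theory Defs
  imports Main
begin

text \<open>Free group F_r on generators indexed 0..r-1 (0 = a, 1 = b, 2.. = a_3,...).
  A letter is (generator index, exponent sign): (i,True) = generator, (i,False) = its inverse.\<close>

type_synonym letter = "nat \<times> bool"

definition inv_letter :: "letter \<Rightarrow> letter" where
  "inv_letter l = (fst l, \<not> snd l)"

definition letters_ok :: "nat \<Rightarrow> letter set \<Rightarrow> bool" where
  "letters_ok r L \<longleftrightarrow> (\<forall>l\<in>L. fst l < r)"

definition reduced_word :: "letter list \<Rightarrow> bool" where
  "reduced_word xs \<longleftrightarrow> (\<forall>i. Suc i < length xs \<longrightarrow> xs ! Suc i \<noteq> inv_letter (xs ! i))"

definition in_Gamma :: "nat \<Rightarrow> letter list \<Rightarrow> bool" where
  "in_Gamma r xs \<longleftrightarrow> letters_ok r (set xs) \<and> reduced_word xs"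

text \<open>Gromov boundary Y: infinite reduced words.\<close>
definition in_Y :: "nat \<Rightarrow> (nat \<Rightarrow> letter) \<Rightarrow> bool" where
  "in_Y r y \<longleftrightarrow> letters_ok r (range y) \<and> (\<forall>i. y (Suc i) \<noteq> inv_letter (y i))"

definition cancel_cons :: "letter \<Rightarrow> letter list \<Rightarrow> letter list" where
  "cancel_cons l ys = (case ys of [] \<Rightarrow> [l] | y # ys' \<Rightarrow> if y = inv_letter l then ys' else l # ys)"

definition wmult :: "letter list \<Rightarrow> letter list \<Rightarrow> letter list" where
  "wmult xs ys = foldr cancel_cons xs ys"

definition winv :: "letter list \<Rightarrow> letter list" where
  "winv xs = rev (map inv_letter xs)"

definition act_letter :: "letter \<Rightarrow> (nat \<Rightarrow> letter) \<Rightarrow> (nat \<Rightarrow> letter)" where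
  "act_letter l y = (if y 0 = inv_letter l then (\<lambda>i. y (Suc i))
                     else (\<lambda>i. case i of 0 \<Rightarrow> l | Suc j \<Rightarrow> y j))"

definition act :: "letter list \<Rightarrow> (nat \<Rightarrow> letter) \<Rightarrow> (nat \<Rightarrow> letter)" where
  "act t y = foldr act_letter t y"

definition starts_with_Y :: "nat \<Rightarrow> (nat \<Rightarrow> letter) \<Rightarrow> letter list \<Rightarrow> bool" where
  "starts_with_Y r y s \<longleftrightarrow> (\<exists>y'. in_Y r y' \<and> last s \<noteq> inv_letter (y' 0) \<and>
      y = (\<lambda>i. if i < length s then s ! i else y' (i - length s)))"

definition V :: "nat \<Rightarrow> letter list \<Rightarrow> (nat \<Rightarrow> letter) set" where
  "V r s = {y. in_Y r y \<and> starts_with_Y r y s}"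

definition gen_a :: letter where "gen_a = (0, True)"
definition gen_b :: letter where "gen_b = (1, True)"

definition u :: "nat \<Rightarrow> letter list" where
  "u n = wmult (replicate n gen_a) (wmult [gen_b] (wmult (replicate n (inv_letter gen_a)) [inv_letter gen_b]))"

definition D :: "nat \<Rightarrow> nat \<Rightarrow> (nat \<Rightarrow> letter) set" where
  "D r n = V r (u n)"

definition starts_with :: "letter list \<Rightarrow> letter list \<Rightarrow> bool" where
  "starts_with t s \<longleftrightarrow> (\<exists>w. t = s @ w)"
definition ends_with :: "letter list \<Rightarrow> letter list \<Rightarrow> bool" where
  "ends_with t s \<longleftrightarrow> (\<exists>w. t = w @ s)"

end

theory Submission
  imports Defs
begin

(*
  Acting by a reduced word t on a boundary point y cancels some suffix s of t = p s against
  the beginning of y = s^-1 y' and leaves t y = p y'.  Write u_n = W_n b^-1, where b^-1 does not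
  occur in W_n.  If s is at least as long as u_n2, then s^-1 starts with u_n2, i.e. t ends with
  u_n2^-1; if p is at least as long as u_n1, then t starts with u_n1.  Otherwise u_n2 = s^-1 d
  and u_n1 = p e, where d and e are both the prefix of y' up to its first letter b^-1, so d = e
  and t = p s = u_n1 u_n2^-1.  For n1 = n2 this would give p = s^-1, contradicting the
  reducedness of t.
*)

lemma inv_letter_inv [simp]: "inv_letter (inv_letter l) = l"
  by (simp add: inv_letter_def)

lemma inv_letter_neq [simp]: "inv_letter l \<noteq> l" "l \<noteq> inv_letter l"
  by (auto simp: inv_letter_def prod_eq_iff)

lemma winv_Nil [simp]: "winv [] = []"
  and winv_Cons [simp]: "winv (l # xs) = winv xs @ [inv_letter l]"
  and winv_append [simp]: "winv (xs @ ys) = winv ys @ winv xs"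
  and winv_winv [simp]: "winv (winv xs) = xs"
  and length_winv [simp]: "length (winv xs) = length xs"
  by (simp_all add: winv_def rev_map o_def)

lemma reduced_word_Cons:
  "reduced_word (l # xs) \<longleftrightarrow> reduced_word xs \<and> (xs \<noteq> [] \<longrightarrow> hd xs \<noteq> inv_letter l)"
  unfolding reduced_word_def
  by (cases xs) (auto simp: All_less_Suc2 nth_Cons split: nat.split)

lemma not_reduced_word_winv_append: "s \<noteq> [] \<Longrightarrow> \<not> reduced_word (winv s @ s)"
  unfolding reduced_word_def neq_Nil_conv
  by (auto intro!: exI[of _ "length s - 1"] simp: nth_append)

lemma wmult_Nil [simp]: "wmult [] ys = ys"
  and wmult_Cons [simp]: "wmult (l # xs) ys = cancel_cons l (wmult xs ys)"
  and wmult_append: "wmult (xs @ ys) zs = wmult xs (wmult ys zs)"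
  by (simp_all add: wmult_def)

lemma wmult_reduced: "reduced_word (xs @ ys) \<Longrightarrow> wmult xs ys = xs @ ys"
proof (induction xs)
  case (Cons l xs)
  then have "wmult xs ys = xs @ ys" and "xs @ ys \<noteq> [] \<longrightarrow> hd (xs @ ys) \<noteq> inv_letter l"
    by (simp_all add: reduced_word_Cons)
  then show ?case
    by (cases "xs @ ys") (auto simp: cancel_cons_def)
qed simp

lemma wmult_winv_cancel: "wmult d (winv d @ zs) = zs"
  by (induction d arbitrary: zs) (simp_all add: cancel_cons_def)

lemma wmult_replicate:
  "ys = [] \<or> hd ys \<noteq> inv_letter l \<Longrightarrow> wmult (replicate n l) ys = replicate n l @ ys"
proof (induction n)
  case (Suc n)
  then show ?case
    by (cases n; cases ys) (auto simp: cancel_cons_def)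
qed simp

lemma reduced_overlap_product:
  assumes "reduced_word (p @ s)" "p @ s \<noteq> []" "U1 = p @ d" "U2 = winv s @ d"
  shows "U1 \<noteq> U2 \<and> p @ s = wmult U1 (winv U2)"
proof
  show "U1 \<noteq> U2"
  proof
    assume "U1 = U2"
    with assms(2-4) have "p @ s = winv s @ s" and "s \<noteq> []"
      by auto
    with assms(1) not_reduced_word_winv_append show False
      by simp
  qed
  show "p @ s = wmult U1 (winv U2)"
    using assms(1,3,4) by (simp add: wmult_append wmult_winv_cancel wmult_reduced)
qed

lemma u_eq:
  assumes "1 \<le> n"
  shows "u n = (replicate n gen_a @ gen_b # replicate n (inv_letter gen_a)) @ [inv_letter gen_b]"
proof -
  have distinct_letters: "gen_b \<noteq> inv_letter gen_a" "inv_letter gen_b \<noteq> gen_a"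
      "inv_letter gen_a \<noteq> inv_letter gen_b"
    by (simp_all add: inv_letter_def gen_a_def gen_b_def)
  have "wmult (replicate n (inv_letter gen_a)) [inv_letter gen_b]
      = replicate n (inv_letter gen_a) @ [inv_letter gen_b]"
    using distinct_letters by (intro wmult_replicate) simp
  moreover have "wmult [gen_b] (replicate n (inv_letter gen_a) @ [inv_letter gen_b])
      = gen_b # replicate n (inv_letter gen_a) @ [inv_letter gen_b]"
    using assms distinct_letters by (cases n) (simp_all add: cancel_cons_def)
  moreover have "wmult (replicate n gen_a) (gen_b # replicate n (inv_letter gen_a) @ [inv_letter gen_b])
      = replicate n gen_a @ gen_b # replicate n (inv_letter gen_a) @ [inv_letter gen_b]"
    using distinct_letters by (intro wmult_replicate) simp
  ultimately show ?thesis
    unfolding u_def by simp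
qed

lemma u_snoc_inv_b:
  assumes "1 \<le> n"
  obtains W where "u n = W @ [inv_letter gen_b]" and "inv_letter gen_b \<notin> set W"
  using u_eq[OF assms] that by (auto simp: inv_letter_def gen_a_def gen_b_def)

definition prepend :: "letter list \<Rightarrow> (nat \<Rightarrow> letter) \<Rightarrow> nat \<Rightarrow> letter" where
  "prepend xs f = (\<lambda>i. if i < length xs then xs ! i else f (i - length xs))"

lemma prepend_Nil [simp]: "prepend [] f = f"
  by (simp add: prepend_def)

lemma prepend_append: "prepend (xs @ ys) f = prepend xs (prepend ys f)"
  by (auto simp: prepend_def nth_append fun_eq_iff)

lemma prepend_hd_tl: "prepend [f 0] (\<lambda>i. f (Suc i)) = f"
  by (auto simp: prepend_def fun_eq_iff)

lemma prepend_Cons_0 [simp]: "prepend (x # xs) f 0 = x"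
  and prepend_Cons_Suc [simp]: "prepend (x # xs) f (Suc i) = prepend xs f i"
  by (simp_all add: prepend_def)

lemma prepend_Cons_eq_iff:
  "prepend (x # xs) f = prepend (y # ys) g \<longleftrightarrow> x = y \<and> prepend xs f = prepend ys g"
proof
  assume eq: "prepend (x # xs) f = prepend (y # ys) g"
  show "x = y \<and> prepend xs f = prepend ys g"
    using fun_cong[OF eq, of 0] fun_cong[OF eq, of "Suc i" for i] by (simp add: fun_eq_iff)
next
  assume "x = y \<and> prepend xs f = prepend ys g"
  then show "prepend (x # xs) f = prepend (y # ys) g"
    by (simp add: fun_eq_iff) (metis not0_implies_Suc prepend_Cons_0 prepend_Cons_Suc)
qed

lemma prepend_eq_prependD:
  assumes "prepend xs f = prepend ys g" "length xs \<le> length ys"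
  shows "take (length xs) ys = xs \<and> f = prepend (drop (length xs) ys) g"
  using assms
proof (induction xs arbitrary: ys)
  case (Cons x xs)
  then obtain y ys' where "ys = y # ys'"
    by (cases ys) auto
  with Cons show ?case
    by (simp add: prepend_Cons_eq_iff)
qed simp

lemma prepend_eq_imp_starts_with:
  assumes "prepend p y = prepend w y1" "length w \<le> length p"
  shows "starts_with (p @ s) w"
proof -
  have "take (length w) p = w"
    using prepend_eq_prependD[OF assms(1)[symmetric] assms(2)] by simp
  then show ?thesis
    unfolding starts_with_def by (metis append.assoc append_take_drop_id)
qed

lemma prepend_winv_eq_imp_ends_with:
  assumes "prepend (winv s) y = prepend w y2" "length w \<le> length s"
  shows "ends_with (p @ s) (winv w)"
proof -
  have "starts_with (winv s @ winv p) w"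
    using prepend_eq_imp_starts_with assms by simp
  then show ?thesis
    unfolding starts_with_def ends_with_def by (metis winv_append winv_winv)
qed

lemma prepend_snoc_marker_eq:
  assumes "prepend (xs @ [c]) f = prepend (ys @ [c]) g" "c \<notin> set xs" "c \<notin> set ys"
  shows "xs = ys"
  using assms
proof (induction xs arbitrary: ys)
  case Nil
  then show ?case
    by (cases ys) (auto simp: prepend_Cons_eq_iff)
next
  case (Cons x xs)
  then show ?case
    by (cases ys) (auto simp: prepend_Cons_eq_iff)
qed

lemma prepend_overlap_common_suffix:
  assumes q: "prepend q y = prepend (W2 @ [c]) y2" "length q \<le> length W2"
    and p: "prepend p y = prepend (W1 @ [c]) y1" "length p \<le> length W1"
    and "c \<notin> set W1" "c \<notin> set W2"
  shows "\<exists>d. W1 @ [c] = p @ d \<and> W2 @ [c] = q @ d"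
proof -
  define d where "d = drop (length q) W2"
  define e where "e = drop (length p) W1"
  have "take (length q) W2 = q" and y_d: "y = prepend (d @ [c]) y2"
    using prepend_eq_prependD[OF q(1)] q(2) by (simp_all add: d_def)
  then have q_d: "W2 @ [c] = q @ d @ [c]"
    unfolding d_def by (metis append.assoc append_take_drop_id)
  have "take (length p) W1 = p" and y_e: "y = prepend (e @ [c]) y1"
    using prepend_eq_prependD[OF p(1)] p(2) by (simp_all add: e_def)
  then have p_e: "W1 @ [c] = p @ e @ [c]"
    unfolding e_def by (metis append.assoc append_take_drop_id)
  have "c \<notin> set d" "c \<notin> set e"
    using assms(5,6) by (auto simp: d_def e_def dest: in_set_dropD)
  with y_d y_e have "e = d"
    using prepend_snoc_marker_eq by metis
  with q_d p_e show ?thesis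
    by blast
qed

lemma u_overlap_common_suffix:
  assumes "1 \<le> n1" "1 \<le> n2"
    and "prepend q y = prepend (u n2) y2" "length q < length (u n2)"
    and "prepend p y = prepend (u n1) y1" "length p < length (u n1)"
  shows "\<exists>d. u n1 = p @ d \<and> u n2 = q @ d"
proof -
  obtain W1 W2 where "u n1 = W1 @ [inv_letter gen_b]" "inv_letter gen_b \<notin> set W1"
    and "u n2 = W2 @ [inv_letter gen_b]" "inv_letter gen_b \<notin> set W2"
    using u_snoc_inv_b assms(1,2) by metis
  with assms(3-6) show ?thesis
    using prepend_overlap_common_suffix[of q y W2 "inv_letter gen_b" y2 p W1 y1] by auto
qed

lemma V_imp_prepend: "y \<in> V r s \<Longrightarrow> \<exists>y'. y = prepend s y'"
  unfolding V_def starts_with_Y_def prepend_def by blast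

lemma act_Nil [simp]: "act [] y = y"
  and act_Cons [simp]: "act (l # t) y = act_letter l (act t y)"
  by (simp_all add: act_def)

lemma act_letter_cancel: "act_letter l (prepend [inv_letter l] f) = f"
  by (simp add: act_letter_def prepend_def)

lemma act_letter_no_cancel: "f 0 \<noteq> inv_letter l \<Longrightarrow> act_letter l f = prepend [l] f"
  by (auto simp: act_letter_def prepend_def fun_eq_iff split: nat.split)

lemma act_reduced_word_decomp:
  assumes "reduced_word t"
  shows "\<exists>p s y'. t = p @ s \<and> y = prepend (winv s) y' \<and> act t y = prepend p y'"
  using assms
proof (induction t)
  case Nil
  show ?case
    by (rule exI[of _ "[]"], rule exI[of _ "[]"]) simp
next
  case (Cons l t)
  then have t_red: "reduced_word t" and hd_t: "t \<noteq> [] \<longrightarrow> hd t \<noteq> inv_letter l"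
    by (simp_all add: reduced_word_Cons)
  from Cons.IH[OF t_red] obtain p s y' where
    t: "t = p @ s" and y: "y = prepend (winv s) y'" and ty: "act t y = prepend p y'"
    by blast
  show ?case
  proof (cases p)
    case (Cons x p')
    then have "act t y 0 \<noteq> inv_letter l"
      using t ty hd_t by (simp add: prepend_def)
    then have "act (l # t) y = prepend (l # p) y'"
      using ty by (simp add: act_letter_no_cancel prepend_append[of "[l]" p, simplified])
    with t y show ?thesis
      by (intro exI[of _ "l # p"] exI[of _ s] exI[of _ y']) simp
  next
    case Nil
    show ?thesis
    proof (cases "y' 0 = inv_letter l")
      case True
      then have "y = prepend (winv (l # s)) (\<lambda>i. y' (Suc i))"
        using y prepend_hd_tl[of y'] by (simp add: prepend_append)
      moreover have "act (l # t) y = (\<lambda>i. y' (Suc i))"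
        using ty Nil True act_letter_cancel[of l "\<lambda>i. y' (Suc i)"] prepend_hd_tl[of y'] by simp
      ultimately show ?thesis
        using t Nil by (intro exI[of _ "[]"] exI[of _ "l # s"]) simp
    next
      case False
      with t y ty Nil show ?thesis
        by (intro exI[of _ "[l]"] exI[of _ s] exI[of _ y']) (simp add: act_letter_no_cancel)
    qed
  qed
qed

theorem lemma5p7:
  fixes r n1 n2 :: nat and t :: "letter list"
  assumes "r \<ge> 2" and "n1 \<ge> 2" and "n2 \<ge> 2"
    and "in_Gamma r t" and "t \<noteq> []"
    and "\<exists>y\<in>D r n2. act t y \<in> D r n1"
  shows "ends_with t (winv (u n2)) \<or> starts_with t (u n1) \<or>
         (n2 \<noteq> n1 \<and> t = wmult (u n1) (winv (u n2)))"
proof -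
  obtain y where "y \<in> D r n2" and "act t y \<in> D r n1"
    using assms(6) by blast
  then obtain y2 y1 where y: "y = prepend (u n2) y2" and ty: "act t y = prepend (u n1) y1"
    unfolding D_def by (blast dest: V_imp_prepend)
  from assms(4) have t_red: "reduced_word t"
    by (simp add: in_Gamma_def)
  then obtain p s y' where t: "t = p @ s"
    and y': "y = prepend (winv s) y'" and ty': "act t y = prepend p y'"
    using act_reduced_word_decomp by blast
  consider "length (u n2) \<le> length s" | "length (u n1) \<le> length p"
    | "length s < length (u n2)" "length p < length (u n1)"
    by linarith
  then show ?thesis
  proof cases
    case 1
    then show ?thesis
      using prepend_winv_eq_imp_ends_with y y' t by metis
  next
    case 2
    then show ?thesis
      using prepend_eq_imp_starts_with ty ty' t by metis
  next
    case 3
    with assms(2,3) y y' ty ty' obtain d where "u n1 = p @ d" and "u n2 = winv s @ d"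
      using u_overlap_common_suffix[of n1 n2 "winv s" y' y2 p y1] by auto
    with reduced_overlap_product t t_red assms(5) show ?thesis
      by metis
  qed
qed

end
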